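(* Assume the capacities satisfy (C1)–(C3), and let $\gamma=\frac1{\tau-1}+\varepsilon<\frac12$ be as in (C3). Let $M$ be a random variable with $\mathbb P(M=m)=\lambda_m/l_N$, $1\le m\le N$, and let $d_N$ be a random variable with distribution $\{g^{(N)}_n\}_{n\ge0}$. Then $$\mathrm{Var}(\lambda_M)=O(N^\gamma)\qquad\text{and}\qquad\mathrm{Var}(d_N)=O(N^\gamma).$$
   Context: Capacities $\lambda_1,\dots,\lambda_N>0$ deterministic; $l_N=\sum_i\lambda_i$, $\mu_N=\frac1N\sum_i\lambda_i$, $\nu_N=\sum_i\lambda_i^2/\sum_i\lambda_i$, $f^{(N)}_n=\frac1N\sum_i e^{-\lambda_i}\frac{\lambda_i^n}{n!}$, $g^{(N)}_n=\frac{1}{N\mu_N}\sum_i e^{-\lambda_i}\frac{\lambda_i^{n+1}}{n!}$ ($n\ge0$); $d_{TV}(p,q)=\frac12\sum_j|p_j-q_j|$. (C1): there are $\mu\in(0,\infty)$, $\nu\in(1,\infty)$, $\alpha_1>0$ with $|\mu_N-\mu|,|\nu_N-\nu|=O(N^{-\alpha_1})$. (C2): there are $N$-independent sequences $f,g$ and $\alpha_2>0$ with $d_{TV}(f^{(N)},f),d_{TV}(g^{(N)},g)=O(N^{-\alpha_2})$. (C3): there is $\tau>3$ such that for every $\varepsilon>0$ (with $\gamma:=\frac1{\tau-1}+\varepsilon<\frac12$), $\limsup_N\frac1N\sum_i\lambda_i^{\tau-1-\varepsilon}<\infty$ and $\max_i\lambda_i\le N^\gamma$. *)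

theory Defs
  imports "HOL-Probability.Probability" "HOL-Library.Landau_Symbols"
begin

definition lN :: "(nat \<Rightarrow> nat \<Rightarrow> real) \<Rightarrow> nat \<Rightarrow> real" where
  "lN lam N = (\<Sum>i=1..N. lam N i)"

definition muN :: "(nat \<Rightarrow> nat \<Rightarrow> real) \<Rightarrow> nat \<Rightarrow> real" where
  "muN lam N = (1 / real N) * (\<Sum>i=1..N. lam N i)"

definition nuN :: "(nat \<Rightarrow> nat \<Rightarrow> real) \<Rightarrow> nat \<Rightarrow> real" where
  "nuN lam N = (\<Sum>i=1..N. (lam N i)^2) / (\<Sum>i=1..N. lam N i)"

definition fN :: "(nat \<Rightarrow> nat \<Rightarrow> real) \<Rightarrow> nat \<Rightarrow> nat \<Rightarrow> real" where
  "fN lam N n = (1 / real N) * (\<Sum>i=1..N. exp (- lam N i) * (lam N i)^n / fact n)"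

definition gN :: "(nat \<Rightarrow> nat \<Rightarrow> real) \<Rightarrow> nat \<Rightarrow> nat \<Rightarrow> real" where
  "gN lam N n = (1 / (real N * muN lam N)) * (\<Sum>i=1..N. exp (- lam N i) * (lam N i)^(n+1) / fact n)"

text \<open>Total variation distance of two sequences on nat (meaningful when the series converges).\<close>
definition dTV :: "(nat \<Rightarrow> real) \<Rightarrow> (nat \<Rightarrow> real) \<Rightarrow> real" where
  "dTV p q = (1/2) * (\<Sum>j. \<bar>p j - q j\<bar>)"

definition M_pmf :: "(nat \<Rightarrow> nat \<Rightarrow> real) \<Rightarrow> nat \<Rightarrow> nat pmf" where
  "M_pmf lam N = embed_pmf (\<lambda>m. if m \<in> {1..N} then lam N m / lN lam N else 0)"

definition d_pmf :: "(nat \<Rightarrow> nat \<Rightarrow> real) \<Rightarrow> nat \<Rightarrow> nat pmf" where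
  "d_pmf lam N = embed_pmf (gN lam N)"

end

theory Submission
  imports Defs "HOL-Real_Asymp.Real_Asymp"
begin

text \<open>
  Both variances are bounded by second moments. The size-biased capacity \<open>\<lambda>\<^sub>M\<close> has
  \<open>E \<lambda>\<^sub>M\<^sup>2 = \<Sigma> \<lambda>\<^sub>i\<^sup>3 / l\<^sub>N \<le> (max\<^sub>i \<lambda>\<^sub>i) \<nu>\<^sub>N\<close>, and \<open>d\<^sub>N\<close> is the mixed Poisson
  distribution with random rate \<open>\<lambda>\<^sub>M\<close>, so \<open>E d\<^sub>N\<^sup>2 = E (\<lambda>\<^sub>M + \<lambda>\<^sub>M\<^sup>2) \<le> (1 + max\<^sub>i \<lambda>\<^sub>i) \<nu>\<^sub>N\<close>.
  By (C1) \<open>\<nu>\<^sub>N\<close> is bounded and by (C3) \<open>max\<^sub>i \<lambda>\<^sub>i \<le> N\<^sup>\<gamma>\<close>.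
\<close>

lemma measure_pmf_variance_le_second_moment:
  fixes p :: "'a pmf" and X :: "'a \<Rightarrow> real"
  assumes "(\<integral>\<^sup>+x. ennreal ((X x)\<^sup>2) \<partial>measure_pmf p) \<le> ennreal C" "C \<ge> 0"
  shows "measure_pmf.variance p X \<le> C"
proof -
  have "(\<integral>\<^sup>+x. ennreal (norm ((X x)\<^sup>2)) \<partial>measure_pmf p) < \<infinity>"
    using assms by (simp add: order_le_less_trans)
  then have int_sq: "integrable (measure_pmf p) (\<lambda>x. (X x)\<^sup>2)"
    by (intro integrableI_bounded) auto
  have int: "integrable (measure_pmf p) X"
    by (rule measure_pmf.square_integrable_imp_integrable[OF _ int_sq]) simp
  have "measure_pmf.variance p X
      = measure_pmf.expectation p (\<lambda>x. (X x)\<^sup>2) - (measure_pmf.expectation p X)\<^sup>2"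
    by (rule measure_pmf.variance_eq[OF int int_sq])
  also have "\<dots> \<le> measure_pmf.expectation p (\<lambda>x. (X x)\<^sup>2)" by simp
  also have "\<dots> = enn2real (\<integral>\<^sup>+x. ennreal ((X x)\<^sup>2) \<partial>measure_pmf p)"
    by (rule integral_eq_nn_integral) auto
  also have "\<dots> \<le> C"
    using assms by (metis enn2real_ennreal enn2real_mono ennreal_neq_top top.not_eq_extremum)
  finally show ?thesis .
qed

lemma poisson_second_moment_sums:
  fixes r :: real
  shows "(\<lambda>n. (real n)\<^sup>2 * (r ^ n / fact n * exp (- r))) sums (r + r\<^sup>2)"
proof -
  have exp_sums: "(\<lambda>n. r ^ n / fact n) sums exp r"
    using exp_converges[of r] by (simp add: divide_inverse mult.commute)
  have "(\<lambda>n. real (Suc n) * (r ^ Suc n / fact (Suc n))) sums (r * exp r)"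
    using sums_mult[OF exp_sums, of r] by (simp add: field_simps del: of_nat_Suc)
  then have first_moment: "(\<lambda>n. real n * (r ^ n / fact n)) sums (r * exp r)"
    by (subst (asm) sums_Suc_iff) simp
  have "(\<lambda>n. (real (Suc n))\<^sup>2 * (r ^ Suc n / fact (Suc n))) sums (r * (r * exp r + exp r))"
    using sums_mult[OF sums_add[OF first_moment exp_sums], of r]
    by (simp add: field_simps power2_eq_square del: of_nat_Suc) (simp add: algebra_simps)
  then have "(\<lambda>n. (real n)\<^sup>2 * (r ^ n / fact n)) sums (r * (r * exp r + exp r))"
    by (subst (asm) sums_Suc_iff) simp
  then have "(\<lambda>n. (real n)\<^sup>2 * (r ^ n / fact n) * exp (- r)) sums (r * (r * exp r + exp r) * exp (- r))"
    by (rule sums_mult2)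
  also have "r * (r * exp r + exp r) * exp (- r) = r + r\<^sup>2"
    by (simp add: exp_minus field_simps power2_eq_square)
  finally show ?thesis
    by (simp add: mult.assoc)
qed

lemma nn_integral_poisson_second_moment:
  fixes r :: real
  assumes "r > 0"
  shows "(\<integral>\<^sup>+n. ennreal ((real n)\<^sup>2) \<partial>measure_pmf (poisson_pmf r)) = ennreal (r + r\<^sup>2)"
proof -
  have "(\<integral>\<^sup>+n. ennreal ((real n)\<^sup>2) \<partial>measure_pmf (poisson_pmf r))
      = (\<Sum>n. ennreal ((real n)\<^sup>2 * (r ^ n / fact n * exp (- r))))"
    using assms by (simp add: nn_integral_measure_pmf nn_integral_count_space_nat
        ennreal_mult'[symmetric] mult.commute)
  also have "\<dots> = ennreal (r + r\<^sup>2)"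
    using poisson_second_moment_sums[of r] assms by (subst suminf_ennreal2) (auto simp: sums_iff)
  finally show ?thesis .
qed

lemma bigo_one_of_dist_bigo_powr:
  fixes x :: "nat \<Rightarrow> real"
  assumes "\<alpha> > 0" "(\<lambda>N. \<bar>x N - c\<bar>) \<in> O(\<lambda>N. real N powr (- \<alpha>))"
  shows "x \<in> O(\<lambda>_. 1)"
proof -
  have "(\<lambda>N. real N powr (- \<alpha>)) \<in> O(\<lambda>_. 1)"
    using assms(1) by real_asymp
  with assms(2) have "(\<lambda>N. x N - c) \<in> O(\<lambda>_. 1)"
    by (simp add: landau_o.big_trans)
  then have "(\<lambda>N. (x N - c) + c) \<in> O(\<lambda>_. 1)"
    by (rule sum_in_bigo) simp
  then show ?thesis by simp
qed

lemma bigo_of_eventually_nonneg_le: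
  fixes f g :: "'a \<Rightarrow> real"
  assumes "\<forall>\<^sub>F x in F. 0 \<le> f x \<and> f x \<le> g x"
  shows "f \<in> O[F](g)"
  using assms by (intro landau_o.big_mono) (auto elim!: eventually_mono)

context
  fixes lam :: "nat \<Rightarrow> nat \<Rightarrow> real" and N :: nat
  assumes lam_pos: "\<And>i. 1 \<le> i \<Longrightarrow> i \<le> N \<Longrightarrow> lam N i > 0"
    and N_pos: "N \<ge> 1"
begin

lemma lN_pos: "lN lam N > 0"
  unfolding lN_def using N_pos lam_pos by (intro sum_pos) auto

lemma lam_nonneg: "m \<in> {1..N} \<Longrightarrow> lam N m \<ge> 0"
  using lam_pos[of m] by simp

lemma nuN_nonneg: "nuN lam N \<ge> 0"
  unfolding nuN_def using lam_nonneg by (intro divide_nonneg_nonneg sum_nonneg) auto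

lemma Max_lam_nonneg: "Max (lam N ` {1..N}) \<ge> 0"
  using lam_pos[of 1] N_pos by (intro order.trans[OF _ Max_ge[of _ "lam N 1"]]) auto

lemma pmf_M_pmf: "pmf (M_pmf lam N) m = (if m \<in> {1..N} then lam N m / lN lam N else 0)"
proof -
  let ?p = "\<lambda>m. if m \<in> {1..N} then lam N m / lN lam N else 0"
  have nonneg: "0 \<le> ?p m" for m
    using lN_pos lam_nonneg by simp
  have "(\<integral>\<^sup>+m. ennreal (?p m) \<partial>count_space UNIV) = (\<Sum>m\<in>{1..N}. ennreal (?p m))"
    by (rule nn_integral_count_space') auto
  also have "\<dots> = ennreal (\<Sum>m\<in>{1..N}. ?p m)"
    using nonneg by (intro sum_ennreal) blast
  also have "(\<Sum>m\<in>{1..N}. ?p m) = (\<Sum>m\<in>{1..N}. lam N m) / lN lam N"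
    by (simp add: sum_divide_distrib)
  also have "\<dots> = 1"
    using lN_pos by (simp add: lN_def)
  finally show ?thesis
    unfolding M_pmf_def using nonneg by (subst pmf_embed_pmf) auto
qed

lemma set_pmf_M_pmf: "set_pmf (M_pmf lam N) \<subseteq> {1..N}"
  using pmf_M_pmf by (auto simp: set_pmf_iff split: if_splits)

lemma nn_integral_M_pmf:
  assumes "\<And>m. m \<in> {1..N} \<Longrightarrow> h m \<ge> 0"
  shows "(\<integral>\<^sup>+m. ennreal (h m) \<partial>measure_pmf (M_pmf lam N))
    = ennreal (\<Sum>m\<in>{1..N}. h m * (lam N m / lN lam N))"
proof -
  have weight_nonneg: "0 \<le> lam N m / lN lam N" if "m \<in> {1..N}" for m
    using lN_pos lam_nonneg[OF that] by simp
  have "(\<integral>\<^sup>+m. ennreal (h m) \<partial>measure_pmf (M_pmf lam N))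
      = (\<Sum>m\<in>{1..N}. ennreal (h m) * pmf (M_pmf lam N) m)"
    using set_pmf_M_pmf by (intro nn_integral_measure_pmf_support) auto
  also have "\<dots> = (\<Sum>m\<in>{1..N}. ennreal (h m * (lam N m / lN lam N)))"
    using assms weight_nonneg
    by (intro sum.cong refl) (simp add: pmf_M_pmf ennreal_mult[symmetric] del: times_divide_eq_right)
  also have "\<dots> = ennreal (\<Sum>m\<in>{1..N}. h m * (lam N m / lN lam N))"
    using assms weight_nonneg by (intro sum_ennreal mult_nonneg_nonneg) auto
  finally show ?thesis .
qed

lemma d_pmf_eq_mixed_poisson:
  "d_pmf lam N = bind_pmf (M_pmf lam N) (\<lambda>m. poisson_pmf (lam N m))"
proof -
  let ?D = "bind_pmf (M_pmf lam N) (\<lambda>m. poisson_pmf (lam N m))"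
  have pmf_D: "pmf ?D n = gN lam N n" for n
  proof -
    have "pmf ?D n = (\<Sum>m\<in>{1..N}. pmf (poisson_pmf (lam N m)) n * pmf (M_pmf lam N) m)"
      unfolding pmf_bind using set_pmf_M_pmf by (intro integral_measure_pmf_real) auto
    also have "\<dots> = (\<Sum>m\<in>{1..N}. exp (- lam N m) * lam N m ^ (n + 1) / fact n / lN lam N)"
      using lam_pos by (intro sum.cong refl) (auto simp: pmf_M_pmf field_simps)
    also have "\<dots> = gN lam N n"
      unfolding gN_def muN_def lN_def using N_pos by (simp add: sum_divide_distrib[symmetric])
    finally show ?thesis .
  qed
  then have "(\<integral>\<^sup>+n. ennreal (gN lam N n) \<partial>count_space UNIV) = 1"
    using nn_integral_pmf_eq_1[of ?D] by simp
  then show ?thesis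
    unfolding d_pmf_def by (intro pmf_eqI) (simp add: pmf_embed_pmf flip: pmf_D)
qed

lemma sum_size_biased_square_le:
  "(\<Sum>m\<in>{1..N}. (lam N m)\<^sup>2 * (lam N m / lN lam N)) \<le> Max (lam N ` {1..N}) * nuN lam N"
proof -
  have "(\<Sum>m\<in>{1..N}. (lam N m)\<^sup>2 * (lam N m / lN lam N))
      = (\<Sum>m\<in>{1..N}. lam N m * ((lam N m)\<^sup>2 / lN lam N))"
    by (simp add: power2_eq_square mult.assoc)
  also have "\<dots> \<le> (\<Sum>m\<in>{1..N}. Max (lam N ` {1..N}) * ((lam N m)\<^sup>2 / lN lam N))"
    using lN_pos by (intro sum_mono mult_right_mono) auto
  also have "\<dots> = Max (lam N ` {1..N}) * nuN lam N"
    by (simp add: nuN_def lN_def sum_distrib_left sum_divide_distrib)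
  finally show ?thesis .
qed

lemma variance_M_pmf_le:
  "measure_pmf.variance (M_pmf lam N) (\<lambda>m. lam N m) \<le> Max (lam N ` {1..N}) * nuN lam N"
proof (rule measure_pmf_variance_le_second_moment)
  have "(\<integral>\<^sup>+m. ennreal ((lam N m)\<^sup>2) \<partial>measure_pmf (M_pmf lam N))
      = ennreal (\<Sum>m\<in>{1..N}. (lam N m)\<^sup>2 * (lam N m / lN lam N))"
    by (rule nn_integral_M_pmf) simp
  also have "\<dots> \<le> ennreal (Max (lam N ` {1..N}) * nuN lam N)"
    by (intro ennreal_leI sum_size_biased_square_le)
  finally show "(\<integral>\<^sup>+m. ennreal ((lam N m)\<^sup>2) \<partial>measure_pmf (M_pmf lam N))
      \<le> ennreal (Max (lam N ` {1..N}) * nuN lam N)" .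
  show "Max (lam N ` {1..N}) * nuN lam N \<ge> 0"
    using Max_lam_nonneg nuN_nonneg by simp
qed

lemma variance_d_pmf_le:
  "measure_pmf.variance (d_pmf lam N) (\<lambda>n. real n) \<le> (1 + Max (lam N ` {1..N})) * nuN lam N"
proof (rule measure_pmf_variance_le_second_moment)
  have "(\<integral>\<^sup>+n. ennreal ((real n)\<^sup>2) \<partial>measure_pmf (d_pmf lam N))
      = (\<integral>\<^sup>+m. (\<integral>\<^sup>+n. ennreal ((real n)\<^sup>2) \<partial>measure_pmf (poisson_pmf (lam N m)))
            \<partial>measure_pmf (M_pmf lam N))"
    by (simp only: d_pmf_eq_mixed_poisson nn_integral_bind_pmf)
  also have "\<dots> = (\<integral>\<^sup>+m. ennreal (lam N m + (lam N m)\<^sup>2) \<partial>measure_pmf (M_pmf lam N))"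
    using set_pmf_M_pmf lam_pos
    by (intro nn_integral_cong_AE) (auto simp: AE_measure_pmf_iff nn_integral_poisson_second_moment)
  also have "\<dots> = ennreal (\<Sum>m\<in>{1..N}. (lam N m + (lam N m)\<^sup>2) * (lam N m / lN lam N))"
    using lam_nonneg by (intro nn_integral_M_pmf) simp
  also have "\<dots> = ennreal (nuN lam N + (\<Sum>m\<in>{1..N}. (lam N m)\<^sup>2 * (lam N m / lN lam N)))"
    by (simp add: nuN_def lN_def sum_divide_distrib sum.distrib[symmetric] power2_eq_square
        distrib_right add_divide_distrib)
  also have "\<dots> \<le> ennreal ((1 + Max (lam N ` {1..N})) * nuN lam N)"
    using sum_size_biased_square_le by (intro ennreal_leI) (simp add: distrib_right)
  finally show "(\<integral>\<^sup>+n. ennreal ((real n)\<^sup>2) \<partial>measure_pmf (d_pmf lam N))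
      \<le> ennreal ((1 + Max (lam N ` {1..N})) * nuN lam N)" .
  show "(1 + Max (lam N ` {1..N})) * nuN lam N \<ge> 0"
    using Max_lam_nonneg nuN_nonneg by simp
qed

end

lemma variances_bigo_Max_bound:
  fixes lam :: "nat \<Rightarrow> nat \<Rightarrow> real" and b :: "nat \<Rightarrow> real"
  assumes pos: "\<And>N i. 1 \<le> i \<Longrightarrow> i \<le> N \<Longrightarrow> lam N i > 0"
    and Max_le: "\<And>N. N \<ge> 1 \<Longrightarrow> Max (lam N ` {1..N}) \<le> b N"
  shows "(\<lambda>N. measure_pmf.variance (M_pmf lam N) (\<lambda>m. lam N m)) \<in> O(\<lambda>N. (1 + b N) * nuN lam N)"
    and "(\<lambda>N. measure_pmf.variance (d_pmf lam N) (\<lambda>n. real n)) \<in> O(\<lambda>N. (1 + b N) * nuN lam N)"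
proof -
  have dominated: "(1 + Max (lam N ` {1..N})) * nuN lam N \<le> (1 + b N) * nuN lam N" if "N \<ge> 1" for N
    using Max_le[OF that] nuN_nonneg[where lam = lam, OF pos that] by (intro mult_right_mono) simp_all
  show "(\<lambda>N. measure_pmf.variance (M_pmf lam N) (\<lambda>m. lam N m)) \<in> O(\<lambda>N. (1 + b N) * nuN lam N)"
    using eventually_ge_at_top[of 1]
  proof (rule bigo_of_eventually_nonneg_le[OF eventually_mono])
    fix N :: nat assume "N \<ge> 1"
    with variance_M_pmf_le[where lam = lam, OF pos] dominated nuN_nonneg[where lam = lam, OF pos]
    show "0 \<le> measure_pmf.variance (M_pmf lam N) (\<lambda>m. lam N m)
        \<and> measure_pmf.variance (M_pmf lam N) (\<lambda>m. lam N m) \<le> (1 + b N) * nuN lam N"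
      by (fastforce simp: distrib_right intro: measure_pmf.variance_positive)
  qed
  show "(\<lambda>N. measure_pmf.variance (d_pmf lam N) (\<lambda>n. real n)) \<in> O(\<lambda>N. (1 + b N) * nuN lam N)"
    using eventually_ge_at_top[of 1]
  proof (rule bigo_of_eventually_nonneg_le[OF eventually_mono])
    fix N :: nat assume "N \<ge> 1"
    with variance_d_pmf_le[where lam = lam, OF pos] dominated
    show "0 \<le> measure_pmf.variance (d_pmf lam N) (\<lambda>n. real n)
        \<and> measure_pmf.variance (d_pmf lam N) (\<lambda>n. real n) \<le> (1 + b N) * nuN lam N"
      by (fastforce intro: measure_pmf.variance_positive)
  qed
qed

theorem lemmaD5:
  fixes lam :: "nat \<Rightarrow> nat \<Rightarrow> real"
    and \<mu> \<nu> \<alpha>1 \<alpha>2 \<tau> :: real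
    and f g :: "nat \<Rightarrow> real"
  assumes pos: "\<And>N i. 1 \<le> i \<Longrightarrow> i \<le> N \<Longrightarrow> lam N i > 0"
    and C1: "\<mu> > 0" "\<nu> > 1" "\<alpha>1 > 0"
      "(\<lambda>N. \<bar>muN lam N - \<mu>\<bar>) \<in> O(\<lambda>N. real N powr (- \<alpha>1))"
      "(\<lambda>N. \<bar>nuN lam N - \<nu>\<bar>) \<in> O(\<lambda>N. real N powr (- \<alpha>1))"
    and C2: "\<alpha>2 > 0"
      "\<And>N. summable (\<lambda>j. \<bar>fN lam N j - f j\<bar>)"
      "\<And>N. summable (\<lambda>j. \<bar>gN lam N j - g j\<bar>)"
      "(\<lambda>N. dTV (fN lam N) f) \<in> O(\<lambda>N. real N powr (- \<alpha>2))"
      "(\<lambda>N. dTV (gN lam N) g) \<in> O(\<lambda>N. real N powr (- \<alpha>2))"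
    and C3: "\<tau> > 3"
      "\<And>\<epsilon>. \<epsilon> > 0 \<Longrightarrow> 1 / (\<tau> - 1) + \<epsilon> < 1/2 \<Longrightarrow>
          limsup (\<lambda>N. ereal ((1 / real N) * (\<Sum>i=1..N. lam N i powr (\<tau> - 1 - \<epsilon>)))) < \<infinity>
          \<and> (\<forall>N \<ge> 1. Max (lam N ` {1..N}) \<le> real N powr (1 / (\<tau> - 1) + \<epsilon>))"
  shows "\<forall>\<epsilon>>0. 1 / (\<tau> - 1) + \<epsilon> < 1/2 \<longrightarrow>
      (\<lambda>N. measure_pmf.variance (M_pmf lam N) (\<lambda>m. lam N m))
         \<in> O(\<lambda>N. real N powr (1 / (\<tau> - 1) + \<epsilon>))
    \<and> (\<lambda>N. measure_pmf.variance (d_pmf lam N) (\<lambda>n. real n))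
         \<in> O(\<lambda>N. real N powr (1 / (\<tau> - 1) + \<epsilon>))"
proof (intro allI impI)
  fix \<epsilon> :: real
  assume \<epsilon>: "\<epsilon> > 0" "1 / (\<tau> - 1) + \<epsilon> < 1/2"
  define \<gamma> where "\<gamma> = 1 / (\<tau> - 1) + \<epsilon>"
  have "\<gamma> > 0"
    using C3(1) \<epsilon>(1) by (simp add: \<gamma>_def add_pos_pos)
  have "(\<lambda>N. (1 + real N powr \<gamma>) * nuN lam N) \<in> O(\<lambda>N. real N powr \<gamma> * 1)"
  proof (rule landau_o.big.mult)
    show "(\<lambda>N. 1 + real N powr \<gamma>) \<in> O(\<lambda>N. real N powr \<gamma>)"
      using \<open>\<gamma> > 0\<close> by real_asymp
    show "(\<lambda>N. nuN lam N) \<in> O(\<lambda>_. 1)"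
      by (rule bigo_one_of_dist_bigo_powr[OF C1(3,5)])
  qed
  then have rate: "(\<lambda>N. (1 + real N powr \<gamma>) * nuN lam N) \<in> O(\<lambda>N. real N powr \<gamma>)"
    by simp
  have Max_le: "Max (lam N ` {1..N}) \<le> real N powr \<gamma>" if "N \<ge> 1" for N
    using C3(2)[OF \<epsilon>] that by (simp add: \<gamma>_def)
  from variances_bigo_Max_bound[OF pos Max_le] rate
  show "(\<lambda>N. measure_pmf.variance (M_pmf lam N) (\<lambda>m. lam N m))
         \<in> O(\<lambda>N. real N powr (1 / (\<tau> - 1) + \<epsilon>))
    \<and> (\<lambda>N. measure_pmf.variance (d_pmf lam N) (\<lambda>n. real n))
         \<in> O(\<lambda>N. real N powr (1 / (\<tau> - 1) + \<epsilon>))"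
    unfolding \<gamma>_def by (blast intro: landau_o.big_trans)
qed

end
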